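(* Let $a,b,c,k,m>0$ and consider the system $$\frac{dx}{dt}=bx(1-x-cy),\qquad \frac{dy}{dt}=y\Big(\frac{1}{1+kx}-y-ax-mxy\Big)$$ with $x(0)>0$, $y(0)>0$. Then the solutions are bounded; in fact $\limsup_{t\to+\infty}x(t)\le 1$ and $\limsup_{t\to+\infty}y(t)\le 1$.
   Context: All parameters $a,b,c,k,m$ are positive constants. *)

theory Defs
  imports "HOL-Analysis.Analysis"
begin

end

theory Submission
  imports Defs
begin

text \<open>Both populations stay positive, since each equation has the form \<open>z' = z \<cdot> g\<close> with a
continuous per-capita rate \<open>g\<close>. Whenever \<open>x > 1\<close> the right-hand side for \<open>x\<close> is at most
\<open>b (1 - x)\<close>, and whenever \<open>y > 1\<close> the one for \<open>y\<close> is at most \<open>1 - y\<close>: above the level 1 each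
variable relaxes towards it at a linear rate, which bounds it by \<open>max 1 (z 0)\<close> and brings it
below \<open>1 + \<epsilon>\<close> after time \<open>O(1/\<epsilon>)\<close>.\<close>

lemma has_real_derivative_at_if_within_atLeast:
  assumes "(f has_real_derivative D) (at u within {s..})" and "s < u"
  shows "(f has_real_derivative D) (at u)"
proof -
  have "at u within {s..} = at u"
    using \<open>s < u\<close> by (intro at_within_interior) simp
  then show ?thesis using assms(1) by simp
qed

lemma continuous_on_atLeast_if_has_real_derivative:
  assumes "\<And>u. u \<ge> s \<Longrightarrow> (f has_real_derivative f' u) (at u within {s..})"
  shows "continuous_on {s..} f"
  using assms by (intro DERIV_continuous_on[where D = f']) simp

lemma pos_if_deriv_eq_mult_self:
  fixes f g :: "real \<Rightarrow> real"
  assumes d: "\<And>u. u \<ge> 0 \<Longrightarrow> (f has_real_derivative f u * g u) (at u within {0..})"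
    and cont_g: "continuous_on {0..} g" and "f 0 > 0" and "t \<ge> 0"
  shows "f t > 0"
proof (rule ccontr)
  assume "\<not> f t > 0"
  define A where "A = {0..t} \<inter> f -` {..0}"
  define t0 where "t0 = Inf A"
  have cont_f: "continuous_on {0..} f"
    using d by (rule continuous_on_atLeast_if_has_real_derivative)
  have "closed A"
    unfolding A_def using continuous_on_subset[OF cont_f]
    by (intro continuous_closed_preimage) auto
  moreover have "t \<in> A" using \<open>t \<ge> 0\<close> \<open>\<not> f t > 0\<close> by (auto simp: A_def)
  moreover have bdd: "bdd_below A" unfolding A_def by (rule bdd_belowI[of _ 0]) auto
  ultimately have "t0 \<in> A" unfolding t0_def using closed_contains_Inf by blast
  then have "f t0 \<le> 0" "0 < t0" using \<open>f 0 > 0\<close> by (auto simp: A_def order.order_iff_strict)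
  have f_pos: "f u > 0" if "0 \<le> u" "u < t0" for u
    using that \<open>t0 \<in> A\<close> cInf_lower[OF _ bdd, of u] by (force simp: A_def t0_def)
  have "compact (g ` {0..t0})"
    by (rule compact_continuous_image[OF continuous_on_subset[OF cont_g]]) auto
  then obtain M where M: "\<And>u. u \<in> {0..t0} \<Longrightarrow> \<bar>g u\<bar> \<le> M"
    using compact_imp_bounded bounded_real by (metis image_eqI)
  \<comment> \<open>\<open>f \<cdot> exp (M u)\<close> has derivative \<open>f (g + M) exp (M u) \<ge> 0\<close> as long as \<open>f > 0\<close>.\<close>
  define h where "h u = f u * exp (M * u)" for u
  have "h 0 \<le> h t0"
  proof (rule DERIV_nonneg_imp_increasing_open[of 0 t0 h])
    fix u assume u: "0 < u" "u < t0"
    have "(h has_real_derivative f u * (g u + M) * exp (M * u)) (at u within {0..})"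
      unfolding h_def using u
      by (auto intro!: derivative_eq_intros d simp: algebra_simps)
    moreover have "f u * (g u + M) * exp (M * u) \<ge> 0"
      using f_pos[of u] M[of u] u by auto
    ultimately show "\<exists>y. (h has_real_derivative y) (at u) \<and> y \<ge> 0"
      using u by (blast intro: has_real_derivative_at_if_within_atLeast)
  next
    show "continuous_on {0..t0} h"
      unfolding h_def using continuous_on_subset[OF cont_f]
      by (intro continuous_intros) auto
  qed (use \<open>0 < t0\<close> in simp)
  then show False
    using \<open>f 0 > 0\<close> mult_nonpos_nonneg[OF \<open>f t0 \<le> 0\<close>, of "exp (M * t0)"]
    by (simp add: h_def)
qed

lemma add_mult_le_if_deriv_le_while_above:
  fixes f f' :: "real \<Rightarrow> real"
  assumes d: "\<And>u. u \<ge> 0 \<Longrightarrow> (f has_real_derivative f' u) (at u within {0..})"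
    and above: "\<And>u. u \<ge> 0 \<Longrightarrow> f u > L \<Longrightarrow> f' u \<le> - \<delta>"
    and "0 \<le> s" "s \<le> t" and above_between: "\<And>u. s < u \<Longrightarrow> u < t \<Longrightarrow> f u > L"
  shows "f t + \<delta> * t \<le> f s + \<delta> * s"
proof (rule DERIV_nonpos_imp_decreasing_open[of s t "\<lambda>u. f u + \<delta> * u"])
  fix u assume u: "s < u" "u < t"
  then have "u > 0" using \<open>0 \<le> s\<close> by simp
  have "((\<lambda>u. f u + \<delta> * u) has_real_derivative f' u + \<delta>) (at u within {0..})"
    using \<open>u > 0\<close> by (auto intro!: derivative_eq_intros d)
  then have "((\<lambda>u. f u + \<delta> * u) has_real_derivative f' u + \<delta>) (at u)"
    using \<open>u > 0\<close> by (rule has_real_derivative_at_if_within_atLeast)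
  moreover have "f' u + \<delta> \<le> 0" using above[of u] above_between[OF u] \<open>u > 0\<close> by simp
  ultimately show "\<exists>y. ((\<lambda>u. f u + \<delta> * u) has_real_derivative y) (at u) \<and> y \<le> 0"
    by blast
next
  show "continuous_on {s..t} (\<lambda>u. f u + \<delta> * u)"
    using continuous_on_subset[OF continuous_on_atLeast_if_has_real_derivative[OF d]] \<open>0 \<le> s\<close>
    by (intro continuous_intros) auto
qed fact

lemma le_max_if_deriv_le_while_above:
  fixes f f' :: "real \<Rightarrow> real"
  assumes d: "\<And>u. u \<ge> 0 \<Longrightarrow> (f has_real_derivative f' u) (at u within {0..})"
    and above: "\<And>u. u \<ge> 0 \<Longrightarrow> f u > L \<Longrightarrow> f' u \<le> - \<delta>"
    and "\<delta> \<ge> 0" and "t \<ge> 0"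
  shows "f t \<le> max L (f 0 - \<delta> * t)"
proof (cases "\<exists>u\<in>{0..t}. f u \<le> L")
  case True
  \<comment> \<open>Compare with the last time \<open>s \<le> t\<close> at which \<open>f \<le> L\<close>.\<close>
  define A where "A = {0..t} \<inter> f -` {..L}"
  define s where "s = Sup A"
  have "closed A"
    unfolding A_def
    using continuous_on_subset[OF continuous_on_atLeast_if_has_real_derivative[OF d]]
    by (intro continuous_closed_preimage) auto
  moreover have "A \<noteq> {}" using True by (auto simp: A_def)
  moreover have bdd: "bdd_above A" unfolding A_def by (rule bdd_aboveI[of _ t]) auto
  ultimately have "s \<in> A" unfolding s_def using closed_contains_Sup by blast
  then have "0 \<le> s" "s \<le> t" "f s \<le> L" by (auto simp: A_def)
  have "f u > L" if "s < u" "u < t" for u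
    using that \<open>0 \<le> s\<close> cSup_upper[OF _ bdd, of u] by (force simp: A_def s_def)
  then have "f t + \<delta> * t \<le> f s + \<delta> * s"
    using add_mult_le_if_deriv_le_while_above[OF d above \<open>0 \<le> s\<close> \<open>s \<le> t\<close>] by blast
  moreover have "\<delta> * s \<le> \<delta> * t" using \<open>s \<le> t\<close> \<open>\<delta> \<ge> 0\<close> by (rule mult_left_mono)
  ultimately show ?thesis using \<open>f s \<le> L\<close> by simp
next
  case False
  then have "f u > L" if "0 < u" "u < t" for u
    using that by (auto simp: not_le less_imp_le)
  then have "f t + \<delta> * t \<le> f 0 + \<delta> * 0"
    using \<open>t \<ge> 0\<close> by (intro add_mult_le_if_deriv_le_while_above[OF d above]) auto
  then show ?thesis by simp
qed

lemma bounded_if_relaxing_above: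
  fixes f f' :: "real \<Rightarrow> real"
  assumes d: "\<And>u. u \<ge> 0 \<Longrightarrow> (f has_real_derivative f' u) (at u within {0..})"
    and relax: "\<And>u. u \<ge> 0 \<Longrightarrow> f u > L \<Longrightarrow> f' u \<le> C * (L - f u)"
    and "C \<ge> 0" and nonneg: "\<And>u. u \<ge> 0 \<Longrightarrow> f u \<ge> 0"
  shows "bounded (f ` {0..})"
proof -
  have "f u \<le> max L (f 0 - 0 * u)" if "u \<ge> 0" for u
  proof (rule le_max_if_deriv_le_while_above[OF d _ order_refl that])
    fix v assume "v \<ge> 0" "f v > L"
    then have "f' v \<le> C * (L - f v)" by (rule relax)
    also have "\<dots> \<le> 0" using \<open>C \<ge> 0\<close> \<open>f v > L\<close> by (simp add: mult_nonneg_nonpos)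
    finally show "f' v \<le> - 0" by simp
  qed
  then have "\<bar>f u\<bar> \<le> max L (f 0)" if "u \<ge> 0" for u
    using nonneg[OF that] that by force
  then show ?thesis unfolding bounded_real by auto
qed

lemma Limsup_le_if_relaxing_above:
  fixes f f' :: "real \<Rightarrow> real"
  assumes d: "\<And>u. u \<ge> 0 \<Longrightarrow> (f has_real_derivative f' u) (at u within {0..})"
    and relax: "\<And>u. u \<ge> 0 \<Longrightarrow> f u > L \<Longrightarrow> f' u \<le> C * (L - f u)"
    and "C > 0"
  shows "Limsup at_top (\<lambda>t. ereal (f t)) \<le> L"
proof (rule ereal_le_epsilon2)
  fix e :: real assume "e > 0"
  have "f t \<le> L + e" if "t \<ge> max 0 ((f 0 - L - e) / (C * e))" for t
  proof -
    have "f t \<le> max (L + e) (f 0 - C * e * t)"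
    proof (rule le_max_if_deriv_le_while_above[OF d])
      fix u assume "u \<ge> 0" "f u > L + e"
      then show "f' u \<le> - (C * e)"
        using relax[of u] \<open>C > 0\<close> \<open>e > 0\<close> mult_strict_left_mono[of "L - f u" "- e" C] by force
    qed (use that \<open>C > 0\<close> \<open>e > 0\<close> in auto)
    moreover have "f 0 - L - e \<le> C * e * t"
      using that \<open>C > 0\<close> \<open>e > 0\<close> by (simp add: divide_le_eq mult.commute)
    ultimately show ?thesis by linarith
  qed
  then have "eventually (\<lambda>t. ereal (f t) \<le> ereal (L + e)) at_top"
    by (intro eventually_at_top_linorderI[of "max 0 ((f 0 - L - e) / (C * e))"]) simp
  then have "Limsup at_top (\<lambda>t. ereal (f t)) \<le> ereal (L + e)"
    by (rule Limsup_bounded)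
  then show "Limsup at_top (\<lambda>t. ereal (f t)) \<le> ereal L + ereal e"
    by simp
qed

lemma competition_rate_le:
  fixes b c x y :: real
  assumes "b > 0" "c > 0" "y > 0" "x > 1"
  shows "b * x * (1 - x - c * y) \<le> b * (1 - x)"
proof -
  have "b * x * (1 - x - c * y) \<le> b * x * (1 - x)"
    using assms by (simp add: mult_left_mono)
  also have "\<dots> \<le> b * (1 - x)"
    using assms by (intro mult_right_mono_neg) auto
  finally show ?thesis .
qed

lemma inhibited_growth_rate_le:
  fixes a k m x y :: real
  assumes "a > 0" "k > 0" "m > 0" "x > 0" "y > 1"
  shows "y * (1 / (1 + k * x) - y - a * x - m * x * y) \<le> 1 * (1 - y)"
proof -
  have "1 / (1 + k * x) \<le> 1" "0 \<le> a * x + m * x * y"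
    using assms by (simp_all add: divide_le_eq)
  then have "1 / (1 + k * x) - y - a * x - m * x * y \<le> 1 - y"
    by linarith
  then have "y * (1 / (1 + k * x) - y - a * x - m * x * y) \<le> y * (1 - y)"
    using \<open>y > 1\<close> by (intro mult_left_mono) auto
  also have "\<dots> \<le> 1 * (1 - y)"
    using assms by (intro mult_right_mono_neg) auto
  finally show ?thesis .
qed

theorem theorem2:
  fixes a b c k m :: real and x y :: "real \<Rightarrow> real"
  assumes "a > 0" and "b > 0" and "c > 0" and "k > 0" and "m > 0"
    and "x 0 > 0" and "y 0 > 0"
    and dx: "\<And>t. t \<ge> 0 \<Longrightarrow>
      (x has_real_derivative (b * x t * (1 - x t - c * y t))) (at t within {0..})"
    and dy: "\<And>t. t \<ge> 0 \<Longrightarrow>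
      (y has_real_derivative (y t * (1 / (1 + k * x t) - y t - a * x t - m * x t * y t)))
        (at t within {0..})"
  shows "bounded (x ` {0..}) \<and> bounded (y ` {0..})
    \<and> Limsup at_top (\<lambda>t. ereal (x t)) \<le> 1 \<and> Limsup at_top (\<lambda>t. ereal (y t)) \<le> 1"
proof -
  note cont_x = continuous_on_atLeast_if_has_real_derivative[OF dx]
  note cont_y = continuous_on_atLeast_if_has_real_derivative[OF dy]
  have x_pos: "x t > 0" if "t \<ge> 0" for t
  proof (rule pos_if_deriv_eq_mult_self[of x "\<lambda>u. b * (1 - x u - c * y u)"])
    show "(x has_real_derivative x u * (b * (1 - x u - c * y u))) (at u within {0..})"
      if "u \<ge> 0" for u
      using dx[OF that] by (simp add: ac_simps)
    show "continuous_on {0..} (\<lambda>u. b * (1 - x u - c * y u))"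
      using cont_x cont_y by (intro continuous_intros)
  qed (use \<open>x 0 > 0\<close> that in auto)
  have y_pos: "y t > 0" if "t \<ge> 0" for t
  proof (rule pos_if_deriv_eq_mult_self[OF dy])
    have "1 + k * x u \<noteq> 0" if "u \<in> {0..}" for u
      using that mult_pos_pos[OF \<open>k > 0\<close> x_pos[of u]] by auto
    then show "continuous_on {0..} (\<lambda>u. 1 / (1 + k * x u) - y u - a * x u - m * x u * y u)"
      using cont_x cont_y by (intro continuous_intros) auto
  qed (use \<open>y 0 > 0\<close> that in auto)
  have x_relax: "b * x u * (1 - x u - c * y u) \<le> b * (1 - x u)" if "u \<ge> 0" "x u > 1" for u
    using competition_rate_le y_pos that assms by blast
  have y_relax: "y u * (1 / (1 + k * x u) - y u - a * x u - m * x u * y u) \<le> 1 * (1 - y u)"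
    if "u \<ge> 0" "y u > 1" for u
    using inhibited_growth_rate_le x_pos that assms by blast
  show ?thesis
    using bounded_if_relaxing_above[OF dx x_relax] bounded_if_relaxing_above[OF dy y_relax]
      Limsup_le_if_relaxing_above[OF dx x_relax \<open>b > 0\<close>]
      Limsup_le_if_relaxing_above[OF dy y_relax zero_less_one] x_pos y_pos \<open>b > 0\<close>
    by (simp add: less_imp_le one_ereal_def)
qed

end
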